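(* Let $L\in\mathbb{R}^{n\times n}$ be the Laplacian of an undirected unweighted graph on $n$ nodes, let $s \in \mathbb{R}^n$ be a mean-zero innate opinion vector and $z = (I+L)^{-1}s$. Let $(u,v)$ be an edge of the graph, $E = \chi_{u,v}\chi_{u,v}^T$ its edge Laplacian, and $\delta = z(u)-z(v)$. Then $$PD(L-E) \ge PD(L) + \delta^2.$$
   Context: $\chi_{u,v}\in\mathbb{R}^n$ is the vector with $1$ in coordinate $u$, $-1$ in coordinate $v$ and $0$ elsewhere. Friedkin–Johnsen model: expressed opinions $z=(I+L)^{-1}s$. With $s$ fixed, the polarization+disagreement of a graph with Laplacian $M$ is $PD(M) = s^T (I+M)^{-1} s$. *)

theory Defs
  imports "HOL-Analysis.Analysis"
begin

definition simple_graph :: "('n::finite \<Rightarrow> 'n \<Rightarrow> bool) \<Rightarrow> bool" where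
  "simple_graph G \<longleftrightarrow> (\<forall>i j. G i j \<longrightarrow> G j i) \<and> (\<forall>i. \<not> G i i)"

definition laplacian :: "('n::finite \<Rightarrow> 'n \<Rightarrow> bool) \<Rightarrow> real^'n^'n" where
  "laplacian G = (\<chi> i j. if i = j then real (card {k. G i k}) else if G i j then -1 else 0)"

definition chi_vec :: "'n::finite \<Rightarrow> 'n \<Rightarrow> real^'n" where
  "chi_vec u v = (\<chi> i. (if i = u then 1 else 0) - (if i = v then 1 else 0))"

definition edge_laplacian :: "'n::finite \<Rightarrow> 'n \<Rightarrow> real^'n^'n" where
  "edge_laplacian u v = (\<chi> i j. chi_vec u v $ i * chi_vec u v $ j)"

definition PD :: "real^'n \<Rightarrow> real^'n^'n \<Rightarrow> real" where
  "PD s M = s \<bullet> (matrix_inv (mat 1 + M) *v s)"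

definition fj_opinions :: "real^'n^'n \<Rightarrow> real^'n \<Rightarrow> real^'n" where
  "fj_opinions L s = matrix_inv (mat 1 + L) *v s"

end

theory Submission
  imports Defs
begin

text \<open>Write \<open>A = I + L\<close> and \<open>B = I + L - E = A - c c\<^sup>T\<close> with \<open>c = \<chi>\<^sub>u\<^sub>v\<close>; both matrices
  are symmetric positive definite because graph Laplacians are positive semidefinite.
  For \<open>z = A\<^sup>-\<^sup>1 s\<close>, \<open>w = B\<^sup>-\<^sup>1 s\<close> and \<open>d = w - z\<close> one has \<open>A d = t c\<close> with \<open>t = c\<^sup>T w\<close>,
  hence \<open>s\<^sup>T d = t \<delta>\<close> and \<open>d\<^sup>T B d = (t - \<delta>) \<delta>\<close> where \<open>\<delta> = c\<^sup>T z\<close>. Nonnegativity of the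
  latter gives \<open>\<delta>\<^sup>2 \<le> t \<delta> = s\<^sup>T w - s\<^sup>T z\<close>.\<close>

lemma matrix_inv_right:
  fixes A :: "'a::field^'n^'n"
  assumes "invertible A"
  shows "A *v (matrix_inv A *v x) = x"
proof -
  have "A ** matrix_inv A = mat 1"
    using assms unfolding invertible_def matrix_inv_def by (metis (mono_tags, lifting) someI_ex)
  then show ?thesis by (metis matrix_vector_mul_assoc matrix_vector_mul_lid)
qed

lemma invertible_if_inner_mult_ge_inner:
  fixes M :: "real^'n^'n"
  assumes "\<And>x. x \<bullet> (M *v x) \<ge> x \<bullet> x"
  shows "invertible M"
proof -
  have "inj ((*v) M)"
  proof (rule injI)
    fix x y assume "M *v x = M *v y"
    then have "M *v (x - y) = 0" by (simp add: matrix_vector_mult_diff_distrib)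
    then have "(x - y) \<bullet> (x - y) \<le> 0" using assms[of "x - y"] by simp
    then show "x = y" by (metis antisym eq_iff_diff_eq_0 inner_eq_zero_iff inner_ge_zero)
  qed
  then show ?thesis
    using matrix_left_invertible_injective invertible_left_inverse by blast
qed

lemma inner_symmetric_matrix:
  fixes M :: "real^'n^'n"
  assumes "transpose M = M"
  shows "x \<bullet> (M *v y) = (M *v x) \<bullet> y"
  by (metis assms dot_lmul_matrix vector_transpose_matrix)

lemma inner_rank_one_downdate_inverse:
  fixes A B :: "real^'n^'n" and c s :: "real^'n"
  assumes "transpose A = A" and "invertible A" and "invertible B"
    and B_eq: "\<And>x. B *v x = A *v x - (c \<bullet> x) *\<^sub>R c"
    and B_nonneg: "\<And>x. x \<bullet> (B *v x) \<ge> 0"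
  shows "s \<bullet> (matrix_inv B *v s) \<ge> s \<bullet> (matrix_inv A *v s) + (c \<bullet> (matrix_inv A *v s))\<^sup>2"
proof -
  define z where "z = matrix_inv A *v s"
  define w where "w = matrix_inv B *v s"
  define d where "d = w - z"
  define \<delta> where "\<delta> = c \<bullet> z"
  define t where "t = c \<bullet> w"
  have Az: "A *v z = s" unfolding z_def using \<open>invertible A\<close> by (rule matrix_inv_right)
  have "A *v w - t *\<^sub>R c = s"
    unfolding t_def B_eq[symmetric] w_def using \<open>invertible B\<close> by (rule matrix_inv_right)
  then have Ad: "A *v d = t *\<^sub>R c"
    unfolding d_def by (simp add: matrix_vector_mult_diff_distrib Az algebra_simps)
  have sd: "s \<bullet> d = t * \<delta>"
    using inner_symmetric_matrix[OF \<open>transpose A = A\<close>, of z d]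
    by (simp add: Az Ad \<delta>_def inner_commute)
  have "d \<bullet> (B *v d) = (t - \<delta>) * \<delta>"
    unfolding B_eq Ad using sd
    by (simp add: d_def t_def \<delta>_def inner_diff_left inner_diff_right inner_commute algebra_simps)
  then have "\<delta>\<^sup>2 \<le> t * \<delta>"
    using B_nonneg[of d] by (simp add: algebra_simps power2_eq_square)
  moreover have "s \<bullet> w = s \<bullet> z + s \<bullet> d" unfolding d_def by (simp add: inner_diff_right)
  ultimately show ?thesis using sd by (simp add: z_def w_def \<delta>_def)
qed

lemma laplacian_mult_vector:
  fixes G :: "'n::finite \<Rightarrow> 'n \<Rightarrow> bool"
  assumes "\<And>i. \<not> G i i"
  shows "(laplacian G *v x) $ i = (\<Sum>j\<in>UNIV. if G i j then x$i - x$j else 0)"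
proof -
  have "(laplacian G *v x) $ i
      = (\<Sum>j\<in>UNIV. if i = j then real (card {k. G i k}) * x$i else 0)
        + (\<Sum>j\<in>UNIV. if G i j then - x$j else 0)"
    unfolding sum.distrib[symmetric]
    by (auto simp: matrix_vector_mult_def laplacian_def assms intro: sum.cong)
  also have "\<dots> = (\<Sum>j\<in>UNIV. if G i j then x$i else 0) + (\<Sum>j\<in>UNIV. if G i j then - x$j else 0)"
    by (simp add: sum.If_cases)
  also have "\<dots> = (\<Sum>j\<in>UNIV. if G i j then x$i - x$j else 0)"
    unfolding sum.distrib[symmetric] by (auto intro: sum.cong)
  finally show ?thesis .
qed

lemma laplacian_quadratic_form:
  fixes G :: "'n::finite \<Rightarrow> 'n \<Rightarrow> bool"
  assumes "simple_graph G"
  shows "2 * (x \<bullet> (laplacian G *v x)) = (\<Sum>i\<in>UNIV. \<Sum>j\<in>UNIV. if G i j then (x$i - x$j)\<^sup>2 else 0)"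
proof -
  have sym: "\<And>i j. G i j \<longleftrightarrow> G j i" and irr: "\<And>i. \<not> G i i"
    using assms unfolding simple_graph_def by auto
  define Q where "Q = x \<bullet> (laplacian G *v x)"
  have Q: "Q = (\<Sum>i\<in>UNIV. \<Sum>j\<in>UNIV. if G i j then x$i * (x$i - x$j) else 0)"
    unfolding Q_def inner_vec_def laplacian_mult_vector[OF irr]
    by (simp add: sum_distrib_left if_distrib cong: if_cong)
  also have "\<dots> = (\<Sum>j\<in>UNIV. \<Sum>i\<in>UNIV. if G i j then x$i * (x$i - x$j) else 0)"
    by (rule sum.swap)
  also have "\<dots> = (\<Sum>i\<in>UNIV. \<Sum>j\<in>UNIV. if G i j then x$j * (x$j - x$i) else 0)"
    using sym by simp
  finally have Q_swapped: "Q = \<dots>" .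
  have "2 * Q = (\<Sum>i\<in>UNIV. \<Sum>j\<in>UNIV.
                  (if G i j then x$i * (x$i - x$j) else 0) + (if G i j then x$j * (x$j - x$i) else 0))"
    unfolding mult_2 by (subst (1) Q, subst Q_swapped) (simp add: sum.distrib)
  also have "\<dots> = (\<Sum>i\<in>UNIV. \<Sum>j\<in>UNIV. if G i j then (x$i - x$j)\<^sup>2 else 0)"
    by (intro sum.cong refl) (simp add: power2_eq_square algebra_simps)
  finally show ?thesis unfolding Q_def .
qed

lemma laplacian_nonneg:
  fixes G :: "'n::finite \<Rightarrow> 'n \<Rightarrow> bool"
  assumes "simple_graph G"
  shows "x \<bullet> (laplacian G *v x) \<ge> 0"
proof -
  have "2 * (x \<bullet> (laplacian G *v x)) \<ge> 0"
    unfolding laplacian_quadratic_form[OF assms] by (intro sum_nonneg) auto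
  then show ?thesis by simp
qed

lemma transpose_laplacian:
  fixes G :: "'n::finite \<Rightarrow> 'n \<Rightarrow> bool"
  assumes "simple_graph G"
  shows "transpose (laplacian G) = laplacian G"
  using assms unfolding simple_graph_def transpose_def laplacian_def
  by (simp add: vec_eq_iff)

lemma inner_mat_1_plus_ge:
  fixes K :: "real^'n^'n"
  assumes "\<And>x. x \<bullet> (K *v x) \<ge> 0"
  shows "x \<bullet> ((mat 1 + K) *v x) \<ge> x \<bullet> x"
  using assms[of x] by (simp add: matrix_vector_mult_add_rdistrib inner_add_right)

definition delete_edge :: "('n \<Rightarrow> 'n \<Rightarrow> bool) \<Rightarrow> 'n \<Rightarrow> 'n \<Rightarrow> 'n \<Rightarrow> 'n \<Rightarrow> bool" where
  "delete_edge G u v = (\<lambda>i j. G i j \<and> {i, j} \<noteq> {u, v})"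

lemma simple_graph_delete_edge:
  "simple_graph G \<Longrightarrow> simple_graph (delete_edge G u v)"
  unfolding simple_graph_def delete_edge_def by (metis insert_commute)

lemma card_neighbours_delete_edge:
  fixes G :: "'n::finite \<Rightarrow> 'n \<Rightarrow> bool"
  assumes "simple_graph G" and "G u v"
  shows "real (card {k. delete_edge G u v i k})
           = real (card {k. G i k}) - (if i = u \<or> i = v then 1 else 0)"
proof -
  have "u \<noteq> v" "G v u" using assms unfolding simple_graph_def by auto
  have "{k. delete_edge G u v i k}
          = {k. G i k} - (if i = u then {v} else if i = v then {u} else {})"
    using \<open>u \<noteq> v\<close> unfolding delete_edge_def by (auto simp: doubleton_eq_iff)
  moreover have "card ({k. G i k} - {j}) = card {k. G i k} - 1" "card {k. G i k} \<ge> 1"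
    if "G i j" for j
    using that by (auto simp: card_Diff_singleton Suc_le_eq card_gt_0_iff)
  ultimately show ?thesis
    using assms(2) \<open>G v u\<close> by (auto simp: of_nat_diff)
qed

lemma laplacian_delete_edge:
  fixes G :: "'n::finite \<Rightarrow> 'n \<Rightarrow> bool"
  assumes "simple_graph G" and "G u v"
  shows "laplacian (delete_edge G u v) = laplacian G - edge_laplacian u v"
proof -
  have "u \<noteq> v" "G v u" using assms unfolding simple_graph_def by auto
  have E: "edge_laplacian u v $ i $ j
             = (if i = j then (if i = u \<or> i = v then 1 else 0) else if {i, j} = {u, v} then -1 else 0)"
    for i j
    using \<open>u \<noteq> v\<close> by (auto simp: edge_laplacian_def chi_vec_def doubleton_eq_iff)
  have L: "laplacian (delete_edge G u v) $ i $ j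
             = (if i = j then real (card {k. G i k}) - (if i = u \<or> i = v then 1 else 0)
                else if G i j \<and> {i, j} \<noteq> {u, v} then -1 else 0)" for i j
    unfolding laplacian_def vec_lambda_beta card_neighbours_delete_edge[OF assms]
    by (simp add: delete_edge_def)
  have "G i j" if "{i, j} = {u, v}" for i j
    using that assms(2) \<open>G v u\<close> by (auto simp: doubleton_eq_iff)
  moreover have "laplacian G $ i $ j
                   = (if i = j then real (card {k. G i k}) else if G i j then -1 else 0)" for i j
    by (simp add: laplacian_def)
  ultimately show ?thesis
    by (simp add: vec_eq_iff E L)
qed

lemma edge_laplacian_mult_vector:
  "edge_laplacian u v *v x = (chi_vec u v \<bullet> x) *\<^sub>R chi_vec u v"
  by (simp add: vec_eq_iff edge_laplacian_def matrix_vector_mult_def inner_vec_def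
      sum_distrib_left algebra_simps)

lemma inner_chi_vec:
  fixes z :: "real^'n::finite"
  shows "chi_vec u v \<bullet> z = z $ u - z $ v"
proof -
  have "chi_vec u v \<bullet> z = (\<Sum>i\<in>UNIV. (if i = u then z$i else 0) - (if i = v then z$i else 0))"
    by (auto simp: inner_vec_def chi_vec_def left_diff_distrib intro!: sum.cong)
  then show ?thesis by (simp add: sum_subtractf)
qed

theorem mainTheorem6:
  fixes G :: "'n::finite \<Rightarrow> 'n \<Rightarrow> bool" and s :: "real^'n" and u v :: 'n
  assumes "simple_graph G"
    and "(\<Sum>i\<in>UNIV. s $ i) = 0"
    and "G u v"
  shows "PD s (laplacian G - edge_laplacian u v)
           \<ge> PD s (laplacian G)
              + (fj_opinions (laplacian G) s $ u - fj_opinions (laplacian G) s $ v)^2"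
proof -
  define A where "A = mat 1 + laplacian G"
  define B where "B = mat 1 + (laplacian G - edge_laplacian u v)"
  have B_nonneg: "x \<bullet> (B *v x) \<ge> x \<bullet> x" for x
    unfolding B_def laplacian_delete_edge[OF assms(1,3), symmetric]
    by (intro inner_mat_1_plus_ge laplacian_nonneg simple_graph_delete_edge assms(1))
  have "transpose A = A"
    using transpose_laplacian[OF assms(1)] unfolding A_def transpose_def vec_eq_iff
    by (simp add: mat_def)
  moreover have "invertible A"
    unfolding A_def by (intro invertible_if_inner_mult_ge_inner inner_mat_1_plus_ge laplacian_nonneg assms(1))
  moreover have "invertible B" using B_nonneg by (rule invertible_if_inner_mult_ge_inner)
  moreover have "B *v x = A *v x - (chi_vec u v \<bullet> x) *\<^sub>R chi_vec u v" for x
    unfolding A_def B_def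
    by (simp add: matrix_vector_mult_add_rdistrib matrix_vector_mult_diff_rdistrib
        edge_laplacian_mult_vector)
  moreover have "x \<bullet> (B *v x) \<ge> 0" for x
    using B_nonneg[of x] inner_ge_zero[of x] by linarith
  ultimately show ?thesis
    using inner_rank_one_downdate_inverse[of A B "chi_vec u v" s]
    unfolding PD_def fj_opinions_def inner_chi_vec A_def B_def by blast
qed

end
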